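(* Let $m>0$ and $a_1,a_2\in(-\infty,4m^2)$. For every $b_2\in\mathbb{R}$ there exist $b_0,b_1\in\mathbb{R}$ such that the equation $$\gamma(a_1-\gamma)(a_2-\gamma)J(\gamma)=b_0+b_1\gamma+b_2\gamma^2$$ admits three distinct real solutions $\gamma_0,\gamma_1,\gamma_2\in(-\infty,4m^2)$.
   Context: $\rho(M)=\frac{1}{16\pi^2}\sqrt{1-\frac{4m^2}{M}}\frac1M$ for $M\ge4m^2$, and $J(\gamma)=\int_{4m^2}^\infty\frac{\rho(M)}{M-\gamma}dM$ for $\gamma<4m^2$. *)

theory Defs
  imports "HOL-Analysis.Analysis"
begin

definition rho :: "real \<Rightarrow> real \<Rightarrow> real" where
  "rho m M = 1 / (16 * pi^2) * sqrt (1 - 4 * m^2 / M) * (1 / M)"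

definition J :: "real \<Rightarrow> real \<Rightarrow> real" where
  "J m \<gamma> = (LBINT M:{4 * m^2..}. rho m M / (M - \<gamma>))"

end

theory Submission
  imports Defs "HOL-Real_Asymp.Real_Asymp"
begin

(* Substituting M = 4 m^2 / (1 - v^2) turns J into a proper integral over [0, 1] that can be
   evaluated in closed form: gamma J(gamma) = (1 - t (pi/2 - arctan t)) / (8 pi^2) with
   t = sqrt ((4 m^2 - gamma) / gamma). Writing gamma = 4 m^2 - e^2, the function
   G(gamma) = gamma (a1 - gamma) (a2 - gamma) J(gamma) - b2 gamma^2 is therefore differentiable in e
   at e = 0 with negative derivative (because (a1 - 4 m^2) (a2 - 4 m^2) > 0), so G lies strictly
   below its chord over [4 m^2 - 4 e^2, 4 m^2] at the point 4 m^2 - e^2. Lowering that chord slightly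
   gives a line that G crosses twice near the threshold. As gamma -> -infinity, G behaves like
   -gamma^2 ln |gamma| / (64 pi^2) and drops below every line, which yields a third crossing by the
   intermediate value theorem. *)

definition J_integrand :: "real \<Rightarrow> real \<Rightarrow> real \<Rightarrow> real" where
  "J_integrand s \<gamma> v = v\<^sup>2 / (s - \<gamma> + \<gamma> * v\<^sup>2)"

lemma J_integrand_denominator_pos:
  fixes s \<gamma> v :: real
  assumes "0 < s" "\<gamma> \<le> s" "0 \<le> v" "v \<le> 1" "\<gamma> < s \<or> 0 < v"
  shows "0 < s - \<gamma> + \<gamma> * v\<^sup>2"
proof (cases "v = 0")
  case True
  then show ?thesis
    using assms by simp
next
  case False
  have "0 \<le> (s - \<gamma>) * (1 - v\<^sup>2)"
    using assms by (simp add: power_le_one)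
  moreover have "0 < s * v\<^sup>2"
    using assms False by simp
  ultimately show ?thesis
    by (simp add: algebra_simps)
qed

lemma J_integrand_nonneg:
  fixes s \<gamma> v :: real
  assumes "0 < s" "\<gamma> \<le> s" "0 \<le> v" "v \<le> 1"
  shows "0 \<le> J_integrand s \<gamma> v"
proof (cases "\<gamma> < s \<or> 0 < v")
  case True
  then show ?thesis
    using J_integrand_denominator_pos[OF assms True] by (simp add: J_integrand_def)
qed (use assms in \<open>simp add: J_integrand_def\<close>)

lemma J_integrand_le:
  fixes s \<gamma> v :: real
  assumes "0 < s" "\<gamma> \<le> s" "0 < v" "v \<le> 1"
  shows "J_integrand s \<gamma> v \<le> 1 / s"
proof -
  have "0 \<le> (s - \<gamma>) * (1 - v\<^sup>2)"
    using assms by (simp add: power_le_one)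
  then have "s * v\<^sup>2 \<le> s - \<gamma> + \<gamma> * v\<^sup>2"
    by (simp add: algebra_simps)
  then show ?thesis
    using J_integrand_denominator_pos[of s \<gamma> v] assms by (simp add: J_integrand_def field_simps)
qed

lemma continuous_on_J_integrand:
  fixes s \<gamma> :: real
  assumes "0 < s" "\<gamma> < s"
  shows "continuous_on {0..1} (J_integrand s \<gamma>)"
  unfolding J_integrand_def
proof (intro continuous_intros ballI)
  fix v :: real assume "v \<in> {0..1}"
  then show "s - \<gamma> + \<gamma> * v\<^sup>2 \<noteq> 0"
    using J_integrand_denominator_pos[of s \<gamma> v] assms by auto
qed

lemma set_integrable_J_integrand:
  fixes s \<gamma> :: real
  assumes "0 < s" "\<gamma> \<le> s"
  shows "set_integrable lborel (einterval 0 1) (J_integrand s \<gamma>)"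
proof (rule set_integrable_bound)
  have "set_integrable lborel {0..1} (\<lambda>_::real. 1 / s)"
    by (intro borel_integrable_atLeastAtMost' continuous_intros)
  then show "set_integrable lborel (einterval 0 1) (\<lambda>_::real. 1 / s)"
    by (rule set_integrable_subset) (auto simp: einterval_iff)
  show "set_borel_measurable lborel (einterval 0 1) (J_integrand s \<gamma>)"
    unfolding set_borel_measurable_def J_integrand_def by measurable
  show "AE v in lborel. v \<in> einterval 0 1 \<longrightarrow> norm (J_integrand s \<gamma> v) \<le> norm (1 / s)"
    using J_integrand_nonneg[OF assms] J_integrand_le[OF assms] \<open>0 < s\<close> by (auto simp: einterval_iff)
qed

lemma rho_substitution:
  fixes m \<gamma> v :: real
  assumes "0 < m" "\<gamma> \<le> 4 * m\<^sup>2" "0 < v" "v < 1"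
  defines "M \<equiv> 4 * m\<^sup>2 / (1 - v\<^sup>2)"
  shows "rho m M / (M - \<gamma>) * (2 * (4 * m\<^sup>2) * v / (1 - v\<^sup>2)\<^sup>2)
           = J_integrand (4 * m\<^sup>2) \<gamma> v / (8 * pi\<^sup>2)"
proof -
  define s where "s = 4 * m\<^sup>2"
  have s: "0 < s"
    using assms by (simp add: s_def)
  have w: "0 < 1 - v\<^sup>2"
    using assms by (simp add: power_less_one_iff)
  have D: "0 < s - \<gamma> + \<gamma> * v\<^sup>2"
    using J_integrand_denominator_pos[OF s, of \<gamma> v] assms by (simp add: s_def)
  have "sqrt (1 - 4 * m\<^sup>2 / M) = v"
    using w s assms by (simp add: M_def flip: s_def)
  moreover have "M - \<gamma> = (s - \<gamma> + \<gamma> * v\<^sup>2) / (1 - v\<^sup>2)"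
    using w by (simp add: M_def s_def field_simps)
  ultimately have "rho m M / (M - \<gamma>) = v * (1 - v\<^sup>2)\<^sup>2 / (16 * pi\<^sup>2 * s * (s - \<gamma> + \<gamma> * v\<^sup>2))"
    using w s D by (simp add: rho_def M_def flip: s_def) (simp add: field_simps power2_eq_square)
  moreover have "v * w\<^sup>2 / (16 * pi\<^sup>2 * s * D) * (2 * s * v / w\<^sup>2) = v\<^sup>2 / (8 * pi\<^sup>2 * D)"
    if "w \<noteq> 0" "D \<noteq> 0" for w D
    using s that by (simp add: field_simps power2_eq_square)
  ultimately show ?thesis
    using w D by (simp add: J_integrand_def flip: s_def)
qed

lemma J_eq_interval_integral_Ioi:
  fixes m \<gamma> :: real
  shows "J m \<gamma> = (LBINT M=ereal (4 * m\<^sup>2)..\<infinity>. rho m M / (M - \<gamma>))"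
proof -
  have "J m \<gamma> = (LBINT M:{4 * m\<^sup>2<..}. rho m M / (M - \<gamma>))"
    unfolding J_def
  proof (rule set_integral_cong_set)
    show "AE M in lborel. M \<in> {4 * m\<^sup>2<..} \<longleftrightarrow> M \<in> {4 * m\<^sup>2..}"
      by (rule eventually_mono[OF AE_lborel_singleton[of "4 * m\<^sup>2"]]) auto
  qed (unfold set_borel_measurable_def rho_def; measurable)+
  then show ?thesis
    by (simp add: interval_integral_Ioi)
qed

lemma J_eq_interval_integral:
  fixes m \<gamma> :: real
  assumes "0 < m" and "\<gamma> \<le> 4 * m\<^sup>2"
  shows "J m \<gamma> = (LBINT v=0..1. J_integrand (4 * m\<^sup>2) \<gamma> v) / (8 * pi\<^sup>2)"
proof -
  define s where "s = 4 * m\<^sup>2"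
  have s: "0 < s" and \<gamma>: "\<gamma> \<le> s"
    using assms by (simp_all add: s_def)
  define f where "f = (\<lambda>M. rho m M / (M - \<gamma>))"
  define g where "g = (\<lambda>v::real. s / (1 - v\<^sup>2))"
  define g' where "g' = (\<lambda>v::real. 2 * s * v / (1 - v\<^sup>2)\<^sup>2)"
  have w: "0 < 1 - v\<^sup>2" if "0 < v" "v < 1" for v :: real
    using that by (simp add: power_less_one_iff)
  have fg: "f (g v) * g' v = J_integrand s \<gamma> v / (8 * pi\<^sup>2)" if "0 < v" "v < 1" for v
    using rho_substitution[OF assms(1) _ that] assms(2) by (simp add: f_def g_def g'_def s_def)
  have "(g \<longlongrightarrow> s) (at_right 0)"
    unfolding g_def by (auto intro!: tendsto_eq_intros)
  moreover have "filterlim g at_top (at_left 1)"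
    unfolding g_def using s by real_asymp
  ultimately have "(LBINT M=ereal s..\<infinity>. f M) = (LBINT v=0..1. f (g v) * g' v)"
  proof (intro interval_integral_substitution_nonneg(2))
    have "set_integrable lborel (einterval 0 1) (\<lambda>v. J_integrand s \<gamma> v / (8 * pi\<^sup>2))"
      using set_integrable_J_integrand[OF s \<gamma>] by simp
    then show "set_integrable lborel (einterval 0 1) (\<lambda>v. f (g v) * g' v)"
      by (rule set_integrable_cong[THEN iffD1, rotated 3]) (auto simp: einterval_iff fg)
    show "DERIV g v :> g' v" if "0 < ereal v" "ereal v < 1" for v
      using w[of v] that unfolding g_def g'_def
      by (auto intro!: derivative_eq_intros simp: field_simps power2_eq_square)
    show "isCont g' v" if "0 < ereal v" "ereal v < 1" for v
      using w[of v] that unfolding g'_def by (auto intro!: continuous_intros)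
    show "0 \<le> g' v" if "0 \<le> ereal v" "ereal v \<le> 1" for v
      using s that by (simp add: g'_def)
    fix v assume "0 < ereal v" "ereal v < 1"
    then have "s < g v"
      using w[of v] s by (simp add: g_def field_simps)
    then have "0 < g v" "0 < g v - \<gamma>" "4 * m\<^sup>2 \<le> g v"
      using s \<gamma> unfolding s_def by linarith+
    then show "isCont f (g v)" "0 \<le> f (g v)"
      unfolding f_def rho_def by (auto intro!: continuous_intros divide_nonneg_nonneg mult_nonneg_nonneg)
  qed (simp_all add: zero_ereal_def one_ereal_def ereal_tendsto_simps)
  also have "\<dots> = (LBINT v=0..1. J_integrand s \<gamma> v / (8 * pi\<^sup>2))"
    by (rule interval_integral_cong) (auto simp: einterval_iff fg)
  finally show ?thesis
    by (simp add: J_eq_interval_integral_Ioi f_def s_def)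
qed

lemma J_eq_integral:
  fixes m \<gamma> :: real
  assumes "0 < m" and "\<gamma> < 4 * m\<^sup>2"
  shows "J m \<gamma> = integral {0..1} (J_integrand (4 * m\<^sup>2) \<gamma>) / (8 * pi\<^sup>2)"
proof -
  have "continuous_on {0..1} (J_integrand (4 * m\<^sup>2) \<gamma>)"
    using assms by (intro continuous_on_J_integrand) simp_all
  then have "set_integrable lborel {0..1} (J_integrand (4 * m\<^sup>2) \<gamma>)"
    by (rule borel_integrable_atLeastAtMost')
  then show ?thesis
    using J_eq_interval_integral[of m \<gamma>] assms
    by (simp add: interval_integral_eq_integral zero_ereal_def one_ereal_def)
qed

lemma J_at_threshold:
  fixes m :: real
  assumes "0 < m"
  shows "J m (4 * m\<^sup>2) = 1 / (32 * pi\<^sup>2 * m\<^sup>2)"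
proof -
  have "J_integrand (4 * m\<^sup>2) (4 * m\<^sup>2) v = 1 / (4 * m\<^sup>2)" if "v \<in> einterval 0 1" for v
    using that assms by (auto simp: J_integrand_def einterval_iff)
  then have "(LBINT v=0..1. J_integrand (4 * m\<^sup>2) (4 * m\<^sup>2) v) = (LBINT v=0..1. 1 / (4 * m\<^sup>2))"
    by (intro interval_integral_cong) auto
  then show ?thesis
    using J_eq_interval_integral[OF assms order.refl] by (simp add: zero_ereal_def one_ereal_def)
qed

definition J_profile :: "real \<Rightarrow> real" where
  "J_profile t = 1 - t * (pi / 2 - arctan t)"

lemma integral_J_integrand:
  fixes s \<gamma> :: real
  assumes "0 < \<gamma>" and "\<gamma> < s"
  shows "integral {0..1} (J_integrand s \<gamma>) = J_profile (sqrt ((s - \<gamma>) / \<gamma>)) / \<gamma>"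
proof -
  define t where "t = sqrt ((s - \<gamma>) / \<gamma>)"
  have t: "0 < t" and t2: "t\<^sup>2 = (s - \<gamma>) / \<gamma>"
    using assms by (simp_all add: t_def)
  define P where "P v = (v - t * arctan (v / t)) / \<gamma>" for v
  have "(P has_real_derivative J_integrand s \<gamma> v) (at v)" for v
  proof -
    have "(P has_real_derivative (1 - t * (1 / t) / (1 + (v / t)\<^sup>2)) / \<gamma>) (at v)"
      using t assms unfolding P_def by (auto intro!: derivative_eq_intros simp: inverse_eq_divide)
    moreover have "(1 - t * (1 / t) / (1 + (v / t)\<^sup>2)) / \<gamma> = v\<^sup>2 / ((t\<^sup>2 + v\<^sup>2) * \<gamma>)"
      using t assms by (simp add: field_simps power2_eq_square)
    moreover have "(t\<^sup>2 + v\<^sup>2) * \<gamma> = s - \<gamma> + \<gamma> * v\<^sup>2"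
      using assms by (simp add: t2 field_simps)
    ultimately show ?thesis
      by (simp add: J_integrand_def)
  qed
  then have "(J_integrand s \<gamma> has_integral P 1 - P 0) {0..1}"
    by (intro fundamental_theorem_of_calculus)
      (auto simp: has_real_derivative_iff_has_vector_derivative intro: has_vector_derivative_at_within)
  moreover have "arctan (1 / t) = pi / 2 - arctan t"
    using arctan_inverse[of t] t by (auto simp: inverse_eq_divide)
  ultimately show ?thesis
    by (simp add: integral_unique P_def J_profile_def flip: t_def)
qed

lemma J_closed_form:
  fixes m \<gamma> :: real
  assumes "0 < m" and "0 < \<gamma>" and "\<gamma> \<le> 4 * m\<^sup>2"
  shows "\<gamma> * J m \<gamma> = J_profile (sqrt ((4 * m\<^sup>2 - \<gamma>) / \<gamma>)) / (8 * pi\<^sup>2)"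
proof (cases "\<gamma> = 4 * m\<^sup>2")
  case True
  then show ?thesis
    using J_at_threshold[OF assms(1)] assms by (simp add: J_profile_def field_simps)
next
  case False
  then show ?thesis
    using J_eq_integral integral_J_integrand assms by simp
qed

lemma continuous_on_J:
  fixes m :: real
  assumes "0 < m"
  shows "continuous_on {..4 * m\<^sup>2} (J m)"
proof -
  define s where "s = 4 * m\<^sup>2"
  have s: "0 < s"
    using assms by (simp add: s_def)
  have "continuous_on ({..<s} \<times> cbox 0 1) (\<lambda>(\<gamma>, v). J_integrand s \<gamma> v)"
    unfolding J_integrand_def split_beta'
  proof (intro continuous_intros ballI)
    fix x :: "real \<times> real" assume "x \<in> {..<s} \<times> cbox 0 1"
    then show "s - fst x + fst x * (snd x)\<^sup>2 \<noteq> 0"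
      using J_integrand_denominator_pos[OF s, of "fst x" "snd x"] by (auto simp: mem_Times_iff)
  qed
  then have "continuous_on {..<s} (\<lambda>\<gamma>. integral (cbox 0 1) (J_integrand s \<gamma>))"
    by (rule integral_continuous_on_param)
  then have "continuous_on {..<s} (\<lambda>\<gamma>. integral {0..1} (J_integrand s \<gamma>) / (8 * pi\<^sup>2))"
    by (intro continuous_intros) auto
  then have integral_below: "continuous_on {..s / 2} (\<lambda>\<gamma>. integral {0..1} (J_integrand s \<gamma>) / (8 * pi\<^sup>2))"
    by (rule continuous_on_subset) (use s in auto)
  have J_below: "J m \<gamma> = integral {0..1} (J_integrand s \<gamma>) / (8 * pi\<^sup>2)" if "\<gamma> \<in> {..s / 2}" for \<gamma>
  proof -
    have "\<gamma> < s"
      using that s by simp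
    then show ?thesis
      using J_eq_integral[OF assms, of \<gamma>] by (simp add: s_def)
  qed
  have below: "continuous_on {..s / 2} (J m)"
    by (rule continuous_on_cong[THEN iffD1, OF refl _ integral_below]) (simp add: J_below)
  have profile_near: "continuous_on {s / 2..s} (\<lambda>\<gamma>. J_profile (sqrt ((s - \<gamma>) / \<gamma>)) / (8 * pi\<^sup>2) / \<gamma>)"
    unfolding J_profile_def using s by (intro continuous_intros) auto
  have J_near: "J m \<gamma> = J_profile (sqrt ((s - \<gamma>) / \<gamma>)) / (8 * pi\<^sup>2) / \<gamma>"
    if "\<gamma> \<in> {s / 2..s}" for \<gamma>
  proof -
    have "0 < \<gamma>"
      using that s by simp
    then show ?thesis
      using J_closed_form[OF assms \<open>0 < \<gamma>\<close>] that by (simp add: eq_divide_eq mult_ac s_def)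
  qed
  have near: "continuous_on {s / 2..s} (J m)"
    by (rule continuous_on_cong[THEN iffD1, OF refl _ profile_near]) (simp add: J_near)
  have "{..s} = {..s / 2} \<union> {s / 2..s}"
    using s by auto
  then show ?thesis
    using continuous_on_closed_Un[OF closed_atMost closed_atLeastAtMost below near]
    by (simp add: s_def)
qed

lemma has_integral_inverse_affine:
  fixes s T :: real
  assumes "0 < s" and "0 < T"
  shows "((\<lambda>v. 1 / (s + 2 * T * (1 - v))) has_integral ln (1 + T / s) / (2 * T)) {1 / 2..1}"
proof -
  define H where "H v = - ln (s + 2 * T * (1 - v)) / (2 * T)" for v :: real
  have "((\<lambda>v. 1 / (s + 2 * T * (1 - v))) has_integral H 1 - H (1 / 2)) {1 / 2..1}"
  proof (intro fundamental_theorem_of_calculus)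
    fix v :: real assume "v \<in> {1 / 2..1}"
    then have "0 < s + 2 * T * (1 - v)"
      using assms by (simp add: add_pos_nonneg)
    then have "(H has_real_derivative 1 / (s + 2 * T * (1 - v))) (at v)"
      unfolding H_def using assms by (auto intro!: derivative_eq_intros simp: divide_simps)
    then show "(H has_vector_derivative 1 / (s + 2 * T * (1 - v))) (at v within {1 / 2..1})"
      by (simp add: has_real_derivative_iff_has_vector_derivative has_vector_derivative_at_within)
  qed simp
  moreover have "1 + T / s = (s + T) / s"
    using assms by (simp add: field_simps)
  then have "H 1 - H (1 / 2) = ln (1 + T / s) / (2 * T)"
    using assms by (simp add: H_def ln_div diff_divide_distrib)
  ultimately show ?thesis
    by simp
qed

lemma integral_J_integrand_ge_ln:
  fixes s T :: real
  assumes s: "0 < s" and T: "0 < T"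
  shows "ln (1 + T / s) / (8 * T) \<le> integral {0..1} (J_integrand s (- T))"
proof -
  have integrable: "J_integrand s (- T) integrable_on {a..b}" if "0 \<le> a" "b \<le> 1" for a b
    using continuous_on_J_integrand[of s "- T"] assms that
    by (intro integrable_continuous_real) (auto elim!: continuous_on_subset)
  have h_integral: "((\<lambda>v. 1 / (s + 2 * T * (1 - v)) / 4) has_integral ln (1 + T / s) / (8 * T)) {1 / 2..1}"
    using has_integral_divide[OF has_integral_inverse_affine[OF assms], of 4] by simp
  have h_le: "1 / (s + 2 * T * (1 - v)) / 4 \<le> J_integrand s (- T) v" if "v \<in> {1 / 2..1}" for v
  proof -
    have "0 \<le> T * (1 - v)\<^sup>2"
      using T by simp
    then have "s + T * (1 - v\<^sup>2) \<le> s + 2 * T * (1 - v)"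
      by (simp add: power2_eq_square algebra_simps)
    moreover have "0 < s + T * (1 - v\<^sup>2)"
      using J_integrand_denominator_pos[OF s, of "- T" v] that s T by (simp add: algebra_simps)
    ultimately have "1 / (s + 2 * T * (1 - v)) / 4 \<le> (1 / 4) / (s + T * (1 - v\<^sup>2))"
      by (simp add: frac_le)
    also have "\<dots> \<le> v\<^sup>2 / (s + T * (1 - v\<^sup>2))"
      using \<open>0 < s + T * (1 - v\<^sup>2)\<close> power_mono[of "1 / 2" v 2] that
      by (intro divide_right_mono) (auto simp: power_divide)
    finally show ?thesis
      by (simp add: J_integrand_def algebra_simps)
  qed
  have "ln (1 + T / s) / (8 * T) \<le> integral {1 / 2..1} (J_integrand s (- T))"
    by (rule has_integral_le[OF h_integral integrable_integral[OF integrable] h_le]) auto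
  also have "\<dots> \<le> integral {0..1} (J_integrand s (- T))"
    using J_integrand_nonneg[OF s, of "- T"] s T
    by (intro integral_subset_le integrable) auto
  finally show ?thesis .
qed

lemma J_ge_ln:
  fixes m T :: real
  assumes "0 < m" and "0 < T"
  shows "ln (1 + T / (4 * m\<^sup>2)) / (64 * pi\<^sup>2 * T) \<le> J m (- T)"
proof -
  have "- T < 4 * m\<^sup>2"
    using assms zero_le_power2[of m] by linarith
  have "ln (1 + T / (4 * m\<^sup>2)) / (64 * pi\<^sup>2 * T) = ln (1 + T / (4 * m\<^sup>2)) / (8 * T) / (8 * pi\<^sup>2)"
    by simp
  also have "\<dots> \<le> integral {0..1} (J_integrand (4 * m\<^sup>2) (- T)) / (8 * pi\<^sup>2)"
    by (intro divide_right_mono integral_J_integrand_ge_ln) (use assms in auto)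
  also have "\<dots> = J m (- T)"
    using J_eq_integral[OF assms(1) \<open>- T < 4 * m\<^sup>2\<close>] by simp
  finally show ?thesis .
qed

lemma eventually_cubic_J_below_quadratic:
  fixes m a1 a2 b0 b1 b2 :: real
  assumes "0 < m"
  shows "\<forall>\<^sub>F \<gamma> in at_bot. \<gamma> * (a1 - \<gamma>) * (a2 - \<gamma>) * J m \<gamma> < b0 + b1 * \<gamma> + b2 * \<gamma>\<^sup>2"
proof -
  have "\<forall>\<^sub>F T in at_top. - (a1 + T) * (a2 + T) * ln (1 + T / (4 * m\<^sup>2)) / (64 * pi\<^sup>2)
                            < b0 - b1 * T + b2 * T\<^sup>2"
    using assms by real_asymp
  moreover have "\<forall>\<^sub>F T::real in at_top. 0 < (a1 + T) * (a2 + T)"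
    by real_asymp
  moreover have "\<forall>\<^sub>F T::real in at_top. 0 < T"
    by (rule eventually_gt_at_top)
  ultimately have "\<forall>\<^sub>F T in at_top. (- T) * (a1 - - T) * (a2 - - T) * J m (- T)
                                      < b0 + b1 * (- T) + b2 * (- T)\<^sup>2"
  proof eventually_elim
    case (elim T)
    have "(- T) * (a1 - - T) * (a2 - - T) * J m (- T) = - (T * ((a1 + T) * (a2 + T))) * J m (- T)"
      by (simp add: algebra_simps)
    also have "\<dots> \<le> - (T * ((a1 + T) * (a2 + T))) * (ln (1 + T / (4 * m\<^sup>2)) / (64 * pi\<^sup>2 * T))"
      using J_ge_ln[OF assms, of T] elim by (intro mult_left_mono_neg) auto
    also have "\<dots> = - (a1 + T) * (a2 + T) * ln (1 + T / (4 * m\<^sup>2)) / (64 * pi\<^sup>2)"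
      using elim by (simp add: field_simps)
    finally show ?case
      using elim by simp
  qed
  then show ?thesis
    by (simp add: at_bot_mirror eventually_filtermap)
qed

lemma eventually_below_chord_of_deriv_neg:
  fixes \<phi> :: "real \<Rightarrow> real"
  assumes "(\<phi> has_real_derivative d) (at 0)" and "d < 0"
  shows "\<forall>\<^sub>F e in at_right 0. 4 * \<phi> e < \<phi> (2 * e) + 3 * \<phi> 0"
proof -
  define \<psi> where "\<psi> e = 4 * \<phi> e - \<phi> (2 * e) - 3 * \<phi> 0" for e
  have "((\<lambda>e. \<phi> (2 * e)) has_real_derivative d * 2) (at 0)"
    by (rule DERIV_chain2) (use assms(1) in \<open>auto intro!: derivative_eq_intros\<close>)
  then have "(\<psi> has_real_derivative 2 * d) (at 0)"
    unfolding \<psi>_def using assms(1) by (auto intro!: derivative_eq_intros)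
  then have "\<exists>\<delta>>0. \<forall>h>0. h < \<delta> \<longrightarrow> \<psi> (0 + h) < \<psi> 0"
    by (rule DERIV_neg_dec_right) (use assms(2) in simp)
  then obtain \<delta> where "0 < \<delta>" and \<delta>: "\<And>e. 0 < e \<Longrightarrow> e < \<delta> \<Longrightarrow> \<psi> e < 0"
    by (auto simp: \<psi>_def)
  show ?thesis
    using eventually_at_right_real[OF \<open>0 < \<delta>\<close>]
  proof (rule eventually_mono)
    fix e :: real assume "e \<in> {0<..<\<delta>}"
    then have "\<psi> e < 0"
      using \<delta> by simp
    then show "4 * \<phi> e < \<phi> (2 * e) + 3 * \<phi> 0"
      by (simp add: \<psi>_def)
  qed
qed

lemma J_profile_has_real_derivative_at_0:
  fixes s :: real
  assumes "0 < s"
  shows "((\<lambda>e. J_profile (e / sqrt (s - e\<^sup>2))) has_real_derivative - pi / (2 * sqrt s)) (at 0)"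
  unfolding J_profile_def using assms
  by (auto intro!: derivative_eq_intros simp: field_simps)

lemma eventually_below_chord_near_threshold:
  fixes m p' q' :: real and p q :: "real \<Rightarrow> real"
  assumes "0 < m" and "0 < p (4 * m\<^sup>2)"
    and p': "(p has_real_derivative p') (at (4 * m\<^sup>2))"
    and q': "(q has_real_derivative q') (at (4 * m\<^sup>2))"
  defines "\<Phi> \<equiv> \<lambda>\<gamma>. p \<gamma> * (\<gamma> * J m \<gamma>) + q \<gamma>"
  shows "\<forall>\<^sub>F e in at_right 0. 4 * \<Phi> (4 * m\<^sup>2 - e\<^sup>2) < \<Phi> (4 * m\<^sup>2 - (2 * e)\<^sup>2) + 3 * \<Phi> (4 * m\<^sup>2)"
proof -
  define s where "s = 4 * m\<^sup>2"
  have s: "0 < s"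
    using assms by (simp add: s_def)
  have flat: "((\<lambda>e. f (s - e\<^sup>2)) has_real_derivative 0) (at 0)"
    if "(f has_real_derivative f') (at s)" for f f'
  proof -
    have "((\<lambda>e. f (s - e\<^sup>2)) has_real_derivative f' * 0) (at 0)"
      by (rule DERIV_chain2[where f = f and g = "\<lambda>e. s - e\<^sup>2"])
        (use that in \<open>auto intro!: derivative_eq_intros\<close>)
    then show ?thesis
      by simp
  qed
  define \<psi> where "\<psi> e = p (s - e\<^sup>2) * J_profile (e / sqrt (s - e\<^sup>2)) / (8 * pi\<^sup>2) + q (s - e\<^sup>2)" for e
  have \<Phi>_eq: "\<Phi> (s - e\<^sup>2) = \<psi> e" if "0 \<le> e" "e\<^sup>2 < s" for e
  proof -
    have "sqrt ((s - (s - e\<^sup>2)) / (s - e\<^sup>2)) = e / sqrt (s - e\<^sup>2)"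
      using that by (simp add: real_sqrt_divide)
    then show ?thesis
      using J_closed_form[OF assms(1), of "s - e\<^sup>2"] that by (simp add: \<Phi>_def \<psi>_def s_def)
  qed
  have "(\<psi> has_real_derivative - p s * pi / (16 * pi\<^sup>2 * sqrt s)) (at 0)"
    unfolding \<psi>_def
    using flat[OF p'[folded s_def]] flat[OF q'[folded s_def]] J_profile_has_real_derivative_at_0[OF s] s
    by (auto intro!: derivative_eq_intros simp: field_simps)
  moreover have "- p s * pi / (16 * pi\<^sup>2 * sqrt s) < 0"
    using assms s by (simp add: s_def divide_pos_pos)
  ultimately have "\<forall>\<^sub>F e in at_right 0. 4 * \<psi> e < \<psi> (2 * e) + 3 * \<psi> 0"
    by (rule eventually_below_chord_of_deriv_neg)
  moreover have "\<forall>\<^sub>F e in at_right 0. e \<in> {0<..<sqrt s / 2}"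
    using s by (intro eventually_at_right_real) simp
  ultimately show ?thesis
    unfolding s_def[symmetric]
  proof eventually_elim
    case (elim e)
    then have "(2 * e)\<^sup>2 < (sqrt s)\<^sup>2"
      by (intro power_strict_mono) auto
    then have "(2 * e)\<^sup>2 < s"
      using s by simp
    moreover have "e\<^sup>2 < (2 * e)\<^sup>2"
      using elim by (simp add: power_mult_distrib)
    ultimately show ?case
      using elim \<Phi>_eq[of e] \<Phi>_eq[of "2 * e"] \<Phi>_eq[of 0] s by simp
  qed
qed

lemma exists_line_separating_chord:
  fixes G :: "real \<Rightarrow> real"
  assumes "y < z" and "z < w" and "(w - y) * G z < (w - z) * G y + (z - y) * G w"
  shows "\<exists>b0 b1. b0 + b1 * y < G y \<and> G z < b0 + b1 * z \<and> b0 + b1 * w < G w"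
proof -
  define b1 where "b1 = (G w - G y) / (w - y)"
  define \<delta> where "\<delta> = ((w - z) * G y + (z - y) * G w - (w - y) * G z) / (2 * (w - y))"
  define b0 where "b0 = G y - b1 * y - \<delta>"
  have "0 < \<delta>"
    using assms by (simp add: \<delta>_def)
  moreover have "b1 * (w - y) = G w - G y"
    using assms by (simp add: b1_def)
  then have "b0 + b1 * w = G w - \<delta>"
    by (simp add: b0_def algebra_simps)
  moreover have "b0 + b1 * z = G z + \<delta>"
  proof -
    have "b1 * (z - y) * (w - y) = (G w - G y) * (z - y)"
      using assms by (simp add: b1_def)
    moreover have "2 * \<delta> * (w - y) = (w - z) * G y + (z - y) * G w - (w - y) * G z"
      using assms by (simp add: \<delta>_def field_simps)
    ultimately have "(G y + b1 * (z - y) - G z) * (w - y) = 2 * \<delta> * (w - y)"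
      by (simp add: algebra_simps)
    then have "G y + b1 * (z - y) - G z = 2 * \<delta>"
      using assms by simp
    then show ?thesis
      by (simp add: b0_def algebra_simps)
  qed
  ultimately show ?thesis
    by (intro exI[of _ b0] exI[of _ b1]) (simp add: b0_def)
qed

lemma three_zeros_of_alternating_signs:
  fixes H :: "real \<Rightarrow> real"
  assumes "continuous_on {x..w} H" and "x < y" "y < z" "z < w"
    and "H x < 0" "0 < H y" "H z < 0" "0 < H w"
  shows "\<exists>r0 r1 r2. x < r0 \<and> r0 < y \<and> y < r1 \<and> r1 < z \<and> z < r2 \<and> r2 < w \<and>
           H r0 = 0 \<and> H r1 = 0 \<and> H r2 = 0"
proof -
  have zero_between: "\<exists>r. a < r \<and> r < b \<and> H r = 0"
    if "x \<le> a" "a < b" "b \<le> w" "H a * H b < 0" for a b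
  proof -
    have "continuous_on {a..b} H"
      using assms(1) by (rule continuous_on_subset) (use that in auto)
    then have "\<exists>r\<ge>a. r \<le> b \<and> H r = 0"
      using that IVT'[of H a 0 b] IVT2'[of H b 0 a] by (auto simp: mult_less_0_iff)
    then show ?thesis
      using that by (auto simp: order.order_iff_strict)
  qed
  show ?thesis
    using zero_between[of x y] zero_between[of y z] zero_between[of z w] assms
    by (auto simp: mult_less_0_iff)
qed

lemma exists_line_crossing_twice_near_threshold:
  fixes m a1 a2 b2 :: real
  assumes "0 < m" and "a1 < 4 * m\<^sup>2" and "a2 < 4 * m\<^sup>2"
  defines "G \<equiv> \<lambda>\<gamma>. \<gamma> * (a1 - \<gamma>) * (a2 - \<gamma>) * J m \<gamma> - b2 * \<gamma>\<^sup>2"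
  shows "\<exists>b0 b1 y z. y < z \<and> z < 4 * m\<^sup>2 \<and>
           b0 + b1 * y < G y \<and> G z < b0 + b1 * z \<and> b0 + b1 * (4 * m\<^sup>2) < G (4 * m\<^sup>2)"
proof -
  define s where "s = 4 * m\<^sup>2"
  have "\<forall>\<^sub>F e in at_right 0. 4 * G (s - e\<^sup>2) < G (s - (2 * e)\<^sup>2) + 3 * G s"
  proof -
    have G_split: "G \<gamma> = (a1 - \<gamma>) * (a2 - \<gamma>) * (\<gamma> * J m \<gamma>) + - b2 * \<gamma>\<^sup>2" for \<gamma>
      by (simp add: G_def algebra_simps)
    have "((\<lambda>\<gamma>. (a1 - \<gamma>) * (a2 - \<gamma>)) has_real_derivative 2 * s - a1 - a2) (at s)"
      by (auto intro!: derivative_eq_intros simp: algebra_simps)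
    moreover have "((\<lambda>\<gamma>. - b2 * \<gamma>\<^sup>2) has_real_derivative - 2 * b2 * s) (at s)"
      by (auto intro!: derivative_eq_intros)
    moreover have "0 < (a1 - s) * (a2 - s)"
      using assms by (simp add: s_def mult_neg_neg)
    ultimately show ?thesis
      unfolding G_split s_def by (intro eventually_below_chord_near_threshold assms(1))
  qed
  with eventually_at_right_less
  have "\<forall>\<^sub>F e in at_right 0. 0 < e \<and> 4 * G (s - e\<^sup>2) < G (s - (2 * e)\<^sup>2) + 3 * G s"
    by (rule eventually_conj)
  then obtain e where "0 < e" and chord: "4 * G (s - e\<^sup>2) < G (s - (2 * e)\<^sup>2) + 3 * G s"
    using eventually_happens'[OF trivial_limit_at_right_real] by blast
  define y z where "y = s - (2 * e)\<^sup>2" and "z = s - e\<^sup>2"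
  have "y < z" "z < s"
    using \<open>0 < e\<close> by (simp_all add: y_def z_def power_mult_distrib)
  have "e\<^sup>2 * (4 * G z) < e\<^sup>2 * (G y + 3 * G s)"
    using chord \<open>0 < e\<close> by (simp add: y_def z_def)
  then have "(s - y) * G z < (s - z) * G y + (z - y) * G s"
    by (simp add: y_def z_def power_mult_distrib algebra_simps)
  then show ?thesis
    using exists_line_separating_chord[OF \<open>y < z\<close> \<open>z < s\<close>] \<open>y < z\<close> \<open>z < s\<close>
    unfolding s_def by blast
qed

theorem proposition4p9:
  fixes m a1 a2 :: real
  assumes "m > 0" and "a1 < 4 * m^2" and "a2 < 4 * m^2"
  shows "\<forall>b2::real. \<exists>b0 b1::real. \<exists>\<gamma>0 \<gamma>1 \<gamma>2::real.
           \<gamma>0 < 4 * m^2 \<and> \<gamma>1 < 4 * m^2 \<and> \<gamma>2 < 4 * m^2 \<and>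
           \<gamma>0 \<noteq> \<gamma>1 \<and> \<gamma>0 \<noteq> \<gamma>2 \<and> \<gamma>1 \<noteq> \<gamma>2 \<and>
           (\<forall>\<gamma>\<in>{\<gamma>0, \<gamma>1, \<gamma>2}.
              \<gamma> * (a1 - \<gamma>) * (a2 - \<gamma>) * J m \<gamma> = b0 + b1 * \<gamma> + b2 * \<gamma>^2)"
proof
  fix b2 :: real
  define G where "G \<gamma> = \<gamma> * (a1 - \<gamma>) * (a2 - \<gamma>) * J m \<gamma> - b2 * \<gamma>\<^sup>2" for \<gamma>
  obtain b0 b1 y z where "y < z" "z < 4 * m\<^sup>2" and sep: "b0 + b1 * y < G y" "G z < b0 + b1 * z"
    "b0 + b1 * (4 * m\<^sup>2) < G (4 * m\<^sup>2)"
    using exists_line_crossing_twice_near_threshold[OF assms, of b2] by (auto simp: G_def)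
  have "\<forall>\<^sub>F \<gamma> in at_bot. \<gamma> < y \<and> G \<gamma> < b0 + b1 * \<gamma>"
    using eventually_gt_at_bot eventually_cubic_J_below_quadratic[OF assms(1), of a1 a2 b0 b1 b2]
    by (rule eventually_conj[OF _ eventually_mono]) (simp add: G_def)
  then obtain x where "x < y" "G x < b0 + b1 * x"
    using eventually_happens'[OF trivial_limit_at_bot_linorder] by blast
  have "continuous_on {x..4 * m\<^sup>2} (J m)"
    using continuous_on_J[OF assms(1)] by (rule continuous_on_subset) auto
  then have "continuous_on {x..4 * m\<^sup>2} (\<lambda>\<gamma>. G \<gamma> - (b0 + b1 * \<gamma>))"
    unfolding G_def by (intro continuous_intros)
  then have "\<exists>r0 r1 r2. x < r0 \<and> r0 < y \<and> y < r1 \<and> r1 < z \<and> z < r2 \<and> r2 < 4 * m\<^sup>2 \<and>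
      G r0 - (b0 + b1 * r0) = 0 \<and> G r1 - (b0 + b1 * r1) = 0 \<and> G r2 - (b0 + b1 * r2) = 0"
    by (rule three_zeros_of_alternating_signs[OF _ \<open>x < y\<close> \<open>y < z\<close> \<open>z < 4 * m\<^sup>2\<close>])
      (use sep \<open>G x < b0 + b1 * x\<close> in auto)
  then obtain r0 r1 r2 where "r0 < y" "y < r1" "r1 < z" "z < r2" "r2 < 4 * m\<^sup>2"
    and "G r0 = b0 + b1 * r0" "G r1 = b0 + b1 * r1" "G r2 = b0 + b1 * r2"
    by auto
  then show "\<exists>b0 b1 \<gamma>0 \<gamma>1 \<gamma>2. \<gamma>0 < 4 * m^2 \<and> \<gamma>1 < 4 * m^2 \<and> \<gamma>2 < 4 * m^2 \<and>
      \<gamma>0 \<noteq> \<gamma>1 \<and> \<gamma>0 \<noteq> \<gamma>2 \<and> \<gamma>1 \<noteq> \<gamma>2 \<and>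
      (\<forall>\<gamma>\<in>{\<gamma>0, \<gamma>1, \<gamma>2}. \<gamma> * (a1 - \<gamma>) * (a2 - \<gamma>) * J m \<gamma> = b0 + b1 * \<gamma> + b2 * \<gamma>^2)"
    by (intro exI[of _ b0] exI[of _ b1] exI[of _ r0] exI[of _ r1] exI[of _ r2]) (auto simp: G_def)
qed

end
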